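(* Let $H\in\mathbb{R}^{n_z\times n_z}$ be symmetric positive definite, $F\in\mathbb{R}^{n_x\times n_z}$, $G\in\mathbb{R}^{n_c\times n_z}$, $S\in\mathbb{R}^{n_c\times n_x}$, $w\in\mathbb{R}^{n_c}$, and assume $\{z: Gz\le Sx+w\}\neq\emptyset$ for every $x\in\mathbb{R}^{n_x}$. Assume LICQ: for every $x\in\mathbb{R}^{n_x}$, the rows $\{G_j: j\in\mathbb{A}(x)\}$ are linearly independent. Let $\kappa$ be a global Lipschitz constant, let $\hat{x}^1,\dots,\hat{x}^q\in\mathbb{R}^{n_x}$ and $x\in\mathbb{R}^{n_x}$. Define index sets recursively by $\mathbb{I}_0=\{1,\dots,n_c\}$ and, for $k=1,\dots,q$, $$\mathbb{T}_k=\big\{j\in\mathbb{A}^c(\hat{x}^k)\cap\mathbb{I}_{k-1} : \mathcal{B}(z^*(\hat{x}^k),\kappa\|x-\hat{x}^k\|)\not\subseteq\mathcal{Z}_j(x)\big\},\qquad \mathbb{I}_k=\big(\mathbb{A}(\hat{x}^k)\cap\mathbb{I}_{k-1}\big)\cup\mathbb{T}_k,$$ and set $\mathbb{I}(x)=\mathbb{I}_q$. Then $z^*(x,\mathbb{I}(x))=z^*(x)$.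
   Context: For a parameter $x$, mp-QP$(x)$ is: minimize $V(z)=\frac12 z^THz+x^TFz$ over $z\in\mathcal{Z}(x)=\{z\in\mathbb{R}^{n_z}: Gz\le Sx+w\}$. $G_j,S_j$ are the $j$-th rows of $G,S$, $w_j$ the $j$-th entry of $w$, $\mathcal{Z}_j(x)=\{z: G_jz\le S_jx+w_j\}$. For $\mathbb{I}\subseteq\{1,\dots,n_c\}$, $\mathcal{Z}(x,\mathbb{I})=\bigcap_{j\in\mathbb{I}}\mathcal{Z}_j(x)$ ($=\mathbb{R}^{n_z}$ if $\mathbb{I}=\emptyset$) and $z^*(x,\mathbb{I})$ is the unique minimizer of $V$ over $\mathcal{Z}(x,\mathbb{I})$; $z^*(x)=z^*(x,\{1,\dots,n_c\})$. Active set $\mathbb{A}(x)=\{j: G_jz^*(x)=S_jx+w_j\}$, inactive set $\mathbb{A}^c(x)=\{j: G_jz^*(x)<S_jx+w_j\}$. A global Lipschitz constant is $\kappa\in\mathbb{R}$ with $\|z^*(x_1,\mathbb{I})-z^*(x_2,\mathbb{I})\|\le\kappa\|x_1-x_2\|$ for all $x_1,x_2$ and all $\mathbb{I}\subseteq\{1,\dots,n_c\}$. $\mathcal{B}(q,r)$ is the closed Euclidean ball. For $G_j\ne0$, the condition $\mathcal{B}(z^*(\hat x^k),\kappa\|x-\hat x^k\|)\not\subseteq\mathcal{Z}_j(x)$ is equivalent to $\kappa\|x-\hat{x}^k\|>\frac{w_j+S_jx-G_jz^*(\hat{x}^k)}{\|G_j\|}$, which is how the paper's Algorithm 2 writes it.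 *)

theory Defs
  imports "HOL-Analysis.Analysis"
begin

text \<open>Decision variable z :: real^'z (n_z = CARD('z)), parameter
 x :: real^'x (n_x = CARD('x)). The n_c constraints are indexed by j < nc;
 G j, S j are the j-th rows of G, S and w j the j-th entry of w.
 H :: real^'z^'z, F :: real^'z^'x (an n_x by n_z matrix), so x^T F z = x \<bullet> (F *v z).\<close>

definition V :: "real^'z^'z \<Rightarrow> real^'z^'x \<Rightarrow> real^'x \<Rightarrow> real^'z \<Rightarrow> real" where
  "V H F x z = (1/2) * (z \<bullet> (H *v z)) + x \<bullet> (F *v z)"

definition Zj :: "(nat \<Rightarrow> real^'z) \<Rightarrow> (nat \<Rightarrow> real^'x) \<Rightarrow> (nat \<Rightarrow> real)
    \<Rightarrow> real^'x \<Rightarrow> nat \<Rightarrow> (real^'z) set" where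
  "Zj G S w x j = {z. G j \<bullet> z \<le> S j \<bullet> x + w j}"

definition ZI :: "(nat \<Rightarrow> real^'z) \<Rightarrow> (nat \<Rightarrow> real^'x) \<Rightarrow> (nat \<Rightarrow> real)
    \<Rightarrow> real^'x \<Rightarrow> nat set \<Rightarrow> (real^'z) set" where
  "ZI G S w x I = (\<Inter>j\<in>I. Zj G S w x j)"

definition zstarI :: "real^'z^'z \<Rightarrow> real^'z^'x \<Rightarrow> (nat \<Rightarrow> real^'z) \<Rightarrow> (nat \<Rightarrow> real^'x)
    \<Rightarrow> (nat \<Rightarrow> real) \<Rightarrow> real^'x \<Rightarrow> nat set \<Rightarrow> real^'z" where
  "zstarI H F G S w x I =
     (THE z. z \<in> ZI G S w x I \<and> (\<forall>y\<in>ZI G S w x I. V H F x z \<le> V H F x y))"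

definition zstar :: "real^'z^'z \<Rightarrow> real^'z^'x \<Rightarrow> (nat \<Rightarrow> real^'z) \<Rightarrow> (nat \<Rightarrow> real^'x)
    \<Rightarrow> (nat \<Rightarrow> real) \<Rightarrow> nat \<Rightarrow> real^'x \<Rightarrow> real^'z" where
  "zstar H F G S w nc x = zstarI H F G S w x {..<nc}"

definition active_set :: "real^'z^'z \<Rightarrow> real^'z^'x \<Rightarrow> (nat \<Rightarrow> real^'z) \<Rightarrow> (nat \<Rightarrow> real^'x)
    \<Rightarrow> (nat \<Rightarrow> real) \<Rightarrow> nat \<Rightarrow> real^'x \<Rightarrow> nat set" where
  "active_set H F G S w nc x =
     {j. j < nc \<and> G j \<bullet> zstar H F G S w nc x = S j \<bullet> x + w j}"

definition inactive_set :: "real^'z^'z \<Rightarrow> real^'z^'x \<Rightarrow> (nat \<Rightarrow> real^'z) \<Rightarrow> (nat \<Rightarrow> real^'x)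
    \<Rightarrow> (nat \<Rightarrow> real) \<Rightarrow> nat \<Rightarrow> real^'x \<Rightarrow> nat set" where
  "inactive_set H F G S w nc x =
     {j. j < nc \<and> G j \<bullet> zstar H F G S w nc x < S j \<bullet> x + w j}"

definition sym_pos_def :: "real^'z^'z \<Rightarrow> bool" where
  "sym_pos_def H \<longleftrightarrow> transpose H = H \<and> (\<forall>z. z \<noteq> 0 \<longrightarrow> z \<bullet> (H *v z) > 0)"

definition global_lipschitz :: "real^'z^'z \<Rightarrow> real^'z^'x \<Rightarrow> (nat \<Rightarrow> real^'z) \<Rightarrow> (nat \<Rightarrow> real^'x)
    \<Rightarrow> (nat \<Rightarrow> real) \<Rightarrow> nat \<Rightarrow> real \<Rightarrow> bool" where
  "global_lipschitz H F G S w nc \<kappa> \<longleftrightarrow>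
     (\<forall>x1 x2 I. I \<subseteq> {..<nc} \<longrightarrow>
        norm (zstarI H F G S w x1 I - zstarI H F G S w x2 I) \<le> \<kappa> * norm (x1 - x2))"

definition rows_lin_indep :: "(nat \<Rightarrow> real^'z) \<Rightarrow> nat set \<Rightarrow> bool" where
  "rows_lin_indep G A \<longleftrightarrow> inj_on G A \<and> independent (G ` A)"

primrec Iset :: "real^'z^'z \<Rightarrow> real^'z^'x \<Rightarrow> (nat \<Rightarrow> real^'z) \<Rightarrow> (nat \<Rightarrow> real^'x)
    \<Rightarrow> (nat \<Rightarrow> real) \<Rightarrow> nat \<Rightarrow> real \<Rightarrow> (nat \<Rightarrow> real^'x) \<Rightarrow> real^'x \<Rightarrow> nat \<Rightarrow> nat set" where
  "Iset H F G S w nc \<kappa> xh x 0 = {..<nc}"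
| "Iset H F G S w nc \<kappa> xh x (Suc k) =
     (active_set H F G S w nc (xh (Suc k)) \<inter> Iset H F G S w nc \<kappa> xh x k) \<union>
     {j \<in> inactive_set H F G S w nc (xh (Suc k)) \<inter> Iset H F G S w nc \<kappa> xh x k.
        \<not> cball (zstar H F G S w nc (xh (Suc k))) (\<kappa> * norm (x - xh (Suc k)))
            \<subseteq> Zj G S w x j}"

end

theory Submission
  imports Defs
begin

(* Induction on k: z*(x) minimises V over Z(x,I) for every I with I_k \<subseteq> I \<subseteq> {1..n_c}.
   Given I \<supseteq> I_k, put A = A(xh^k), B = I_(k-1) - I (constraints inactive at xh^k whose ball
   certificate holds at x) and C = A - I. By the Lipschitz bound, z*(x, I \<union> A) lies within
   \<kappa>|x - xh^k| of z*(xh^k, I \<union> A) = z*(xh^k), so it satisfies the constraints in B; hence it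
   coincides with z*(x), which is therefore optimal both for I \<union> B (induction hypothesis) and
   for I \<union> C. With B \<inter> C = {} and LICQ, first-order optimality then transfers to I alone. *)

definition minimizer_on :: "('a \<Rightarrow> real) \<Rightarrow> 'a set \<Rightarrow> 'a \<Rightarrow> bool" where
  "minimizer_on f K z \<longleftrightarrow> z \<in> K \<and> (\<forall>y\<in>K. f z \<le> f y)"

lemma minimizer_on_subset:
  "minimizer_on f K z \<Longrightarrow> L \<subseteq> K \<Longrightarrow> z \<in> L \<Longrightarrow> minimizer_on f L z"
  unfolding minimizer_on_def by blast

definition V_deriv :: "real^'z^'z \<Rightarrow> real^'z^'x \<Rightarrow> real^'x \<Rightarrow> real^'z \<Rightarrow> real^'z \<Rightarrow> real" where
  "V_deriv H F x z h = (1/2) * (z \<bullet> (H *v h)) + (1/2) * (h \<bullet> (H *v z)) + x \<bullet> (F *v h)"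

lemma V_add_scaleR:
  "V H F x (z + t *\<^sub>R h) = V H F x z + t * V_deriv H F x z h + t\<^sup>2 / 2 * (h \<bullet> (H *v h))"
  unfolding V_def V_deriv_def
  by (simp add: matrix_vector_right_distrib matrix_vector_mult_scaleR inner_add_left
      inner_add_right power2_eq_square field_simps)

lemma linear_V_deriv: "linear (V_deriv H F x z)"
  by (rule linearI)
    (simp_all add: V_deriv_def matrix_vector_right_distrib matrix_vector_mult_scaleR
      inner_add_left inner_add_right algebra_simps)

lemma V_add_ge:
  assumes "0 \<le> h \<bullet> (H *v h)"
  shows "V H F x z + V_deriv H F x z h \<le> V H F x (z + h)"
  using V_add_scaleR[of H F x z 1 h] assms by simp

lemma V_deriv_nonneg_at_minimizer:
  assumes min: "minimizer_on (V H F x) K z"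
    and feasible: "eventually (\<lambda>t. z + t *\<^sub>R h \<in> K) (at_right 0)"
  shows "0 \<le> V_deriv H F x z h"
proof -
  let ?D = "V_deriv H F x z h" and ?q = "h \<bullet> (H *v h)"
  have "((\<lambda>t. ?D + t / 2 * ?q) \<longlongrightarrow> ?D) (at_right 0)"
    by (auto intro!: tendsto_eq_intros)
  moreover have "eventually (\<lambda>t. 0 \<le> ?D + t / 2 * ?q) (at_right 0)"
    using feasible eventually_at_right_less[of 0]
  proof eventually_elim
    case (elim t)
    then have "V H F x z \<le> V H F x (z + t *\<^sub>R h)"
      using min unfolding minimizer_on_def by blast
    then have "0 \<le> t * (?D + t / 2 * ?q)"
      unfolding V_add_scaleR by (simp add: algebra_simps power2_eq_square)
    then show ?case
      using elim by (simp add: zero_le_mult_iff)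
  qed
  ultimately show ?thesis
    by (rule tendsto_lowerbound) simp
qed

lemma V_minimizer_unique:
  assumes pd: "\<And>h. h \<noteq> 0 \<Longrightarrow> 0 < h \<bullet> (H *v h)" and "convex K"
    and min1: "minimizer_on (V H F x) K z1" and min2: "minimizer_on (V H F x) K z2"
  shows "z1 = z2"
proof (rule ccontr)
  assume "z1 \<noteq> z2"
  define h where "h = z2 - z1"
  have "z1 \<in> K" "z2 \<in> K"
    using min1 min2 unfolding minimizer_on_def by auto
  have "eventually (\<lambda>t. z1 + t *\<^sub>R h \<in> K) (at_right 0)"
    unfolding eventually_at_right_field
  proof (intro exI[of _ 1] conjI allI impI)
    fix t :: real assume "0 < t" "t < 1"
    then have "(1 - t) *\<^sub>R z1 + t *\<^sub>R z2 \<in> K"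
      using \<open>convex K\<close> \<open>z1 \<in> K\<close> \<open>z2 \<in> K\<close> by (intro convexD) auto
    then show "z1 + t *\<^sub>R h \<in> K"
      by (simp add: h_def algebra_simps)
  qed simp
  then have "0 \<le> V_deriv H F x z1 h"
    by (rule V_deriv_nonneg_at_minimizer[OF min1])
  moreover have "0 < h \<bullet> (H *v h)"
    using pd \<open>z1 \<noteq> z2\<close> by (simp add: h_def)
  moreover have "V H F x z2 = V H F x z1 + V_deriv H F x z1 h + 1 / 2 * (h \<bullet> (H *v h))"
    using V_add_scaleR[of H F x z1 1 h] by (simp add: h_def)
  ultimately have "V H F x z1 < V H F x z2"
    by simp
  with min2 \<open>z1 \<in> K\<close> show False
    unfolding minimizer_on_def by fastforce
qed

lemma pos_def_quadratic_form_lower_bound: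
  fixes H :: "real^'z^'z"
  assumes pd: "\<And>h. h \<noteq> 0 \<Longrightarrow> 0 < h \<bullet> (H *v h)"
  obtains lam where "0 < lam" "\<And>h. lam * (norm h)\<^sup>2 \<le> h \<bullet> (H *v h)"
proof -
  have "continuous_on (sphere 0 1) (\<lambda>h. h \<bullet> (H *v h))"
    by (intro continuous_intros linear_continuous_on) simp
  moreover obtain b :: "real^'z" where "b \<in> Basis"
    using nonempty_Basis by blast
  then have "sphere (0 :: real^'z) 1 \<noteq> {}"
    by (metis mem_sphere_0 norm_Basis empty_iff)
  ultimately obtain u where u: "u \<in> sphere 0 1" "\<And>v. v \<in> sphere 0 1 \<Longrightarrow> u \<bullet> (H *v u) \<le> v \<bullet> (H *v v)"
    using continuous_attains_inf[OF compact_sphere] by blast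
  show ?thesis
  proof
    show "0 < u \<bullet> (H *v u)"
      using pd[of u] u(1) by (metis norm_zero mem_sphere_0 zero_neq_one)
    fix h :: "real^'z"
    show "u \<bullet> (H *v u) * (norm h)\<^sup>2 \<le> h \<bullet> (H *v h)"
    proof (cases "h = 0")
      case False
      define v where "v = (1 / norm h) *\<^sub>R h"
      have "h = norm h *\<^sub>R v"
        using False by (simp add: v_def)
      then have "h \<bullet> (H *v h) = (norm h)\<^sup>2 * (v \<bullet> (H *v v))"
        by (metis (no_types) inner_scaleR_left inner_scaleR_right matrix_vector_mult_scaleR
            mult.assoc power2_eq_square)
      moreover have "v \<in> sphere 0 1"
        using False by (simp add: v_def)
      then have "u \<bullet> (H *v u) \<le> v \<bullet> (H *v v)"
        by (rule u(2))
      ultimately show ?thesis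
        by (metis mult.commute mult_right_mono zero_le_power2)
    qed simp
  qed
qed

lemma continuous_on_V: "continuous_on A (V H F x)"
  unfolding V_def by (intro continuous_intros linear_continuous_on) simp_all

lemma bounded_V_sublevel:
  assumes pd: "\<And>h. h \<noteq> 0 \<Longrightarrow> 0 < h \<bullet> (H *v h)"
  shows "bounded {z. V H F x z \<le> c}"
proof -
  obtain lam where lam: "0 < lam" "\<And>h. lam * (norm h)\<^sup>2 \<le> h \<bullet> (H *v h)"
    using pos_def_quadratic_form_lower_bound[OF pd] by blast
  obtain M where M: "0 < M" "\<And>z. norm (F *v z) \<le> norm z * M"
    using bounded_linear.pos_bounded[OF matrix_vector_mul_bounded_linear[of F]] by blast
  define C where "C = norm x * M"
  have "C \<ge> 0"
    using M(1) by (simp add: C_def)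
  have V_ge: "lam / 2 * (norm z)\<^sup>2 - C * norm z \<le> V H F x z" for z
  proof -
    have "- (x \<bullet> (F *v z)) \<le> norm x * norm (F *v z)"
      using norm_cauchy_schwarz[of "- x" "F *v z"] by simp
    also have "\<dots> \<le> norm x * (norm z * M)"
      using M(2) by (rule mult_left_mono) simp
    also have "\<dots> = C * norm z"
      by (simp add: C_def)
    finally show ?thesis
      using lam(2)[of z] unfolding V_def by simp
  qed
  have "norm z \<le> max 1 (2 * (C + \<bar>c\<bar>) / lam)" if "V H F x z \<le> c" for z
  proof (cases "norm z \<le> 1")
    case False
    have "lam / 2 * norm z * norm z \<le> C * norm z + \<bar>c\<bar>"
      using V_ge[of z] that by (simp add: power2_eq_square)
    also have "\<dots> \<le> (C + \<bar>c\<bar>) * norm z"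
      using False by (simp add: algebra_simps mult_le_cancel_left1)
    finally have "lam / 2 * norm z \<le> C + \<bar>c\<bar>"
      using False by (subst (asm) mult_le_cancel_right_pos) auto
    then have "norm z \<le> 2 * (C + \<bar>c\<bar>) / lam"
      using lam(1) by (simp add: pos_le_divide_eq mult.commute)
    then show ?thesis
      by (rule max.coboundedI2)
  qed simp
  then show ?thesis
    unfolding bounded_iff by blast
qed

lemma V_minimizer_exists:
  assumes pd: "\<And>h. h \<noteq> 0 \<Longrightarrow> 0 < h \<bullet> (H *v h)" and "closed K" and "p \<in> K"
  obtains z where "minimizer_on (V H F x) K z"
proof -
  let ?L = "K \<inter> {z. V H F x z \<le> V H F x p}"
  have "closed ?L"
    using \<open>closed K\<close> by (intro closed_Int closed_Collect_le continuous_on_V continuous_on_const)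
  moreover have "bounded ?L"
    using bounded_V_sublevel[OF pd, of F x "V H F x p"] by (rule bounded_subset) auto
  ultimately have "compact ?L"
    by (simp add: compact_eq_bounded_closed)
  moreover have "p \<in> ?L"
    using \<open>p \<in> K\<close> by simp
  ultimately obtain z where z: "z \<in> ?L" "\<And>y. y \<in> ?L \<Longrightarrow> V H F x z \<le> V H F x y"
    using continuous_attains_inf[OF _ _ continuous_on_V] by (metis empty_iff)
  have "V H F x z \<le> V H F x y" if "y \<in> K" for y
  proof (cases "V H F x y \<le> V H F x p")
    case True
    with that show ?thesis by (intro z(2)) simp
  next
    case False
    with z(2)[OF \<open>p \<in> ?L\<close>] show ?thesis by simp
  qed
  with z(1) show ?thesis
    using that unfolding minimizer_on_def by blast
qed

lemma convex_ZI: "convex (ZI G S w x I)"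
  unfolding ZI_def Zj_def by (intro convex_INT ballI convex_halfspace_le)

lemma closed_ZI: "closed (ZI G S w x I)"
  unfolding ZI_def Zj_def by (intro closed_INT ballI closed_halfspace_le)

lemma ZI_antimono: "I \<subseteq> J \<Longrightarrow> ZI G S w x J \<subseteq> ZI G S w x I"
  unfolding ZI_def by auto

lemma ZI_Un: "ZI G S w x (I \<union> J) = ZI G S w x I \<inter> ZI G S w x J"
  unfolding ZI_def by auto

lemma zstarI_eqI:
  assumes pd: "\<And>h. h \<noteq> 0 \<Longrightarrow> 0 < h \<bullet> (H *v h)"
    and min: "minimizer_on (V H F x) (ZI G S w x I) z"
  shows "zstarI H F G S w x I = z"
  unfolding zstarI_def
proof (rule the_equality)
  show "z \<in> ZI G S w x I \<and> (\<forall>y\<in>ZI G S w x I. V H F x z \<le> V H F x y)"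
    using min unfolding minimizer_on_def .
next
  fix z' assume "z' \<in> ZI G S w x I \<and> (\<forall>y\<in>ZI G S w x I. V H F x z' \<le> V H F x y)"
  then show "z' = z"
    using V_minimizer_unique[OF pd convex_ZI _ min] unfolding minimizer_on_def by blast
qed

lemma eventually_halfspace_le_along:
  fixes g z h :: "'a::real_inner"
  assumes "g \<bullet> z \<le> b" and "g \<bullet> z = b \<Longrightarrow> g \<bullet> h \<le> 0"
  shows "eventually (\<lambda>t. g \<bullet> (z + t *\<^sub>R h) \<le> b) (at_right 0)"
proof (cases "g \<bullet> z < b")
  case True
  have "((\<lambda>t. g \<bullet> z + t * (g \<bullet> h)) \<longlongrightarrow> g \<bullet> z) (at_right 0)"
    by (auto intro!: tendsto_eq_intros)
  then have "eventually (\<lambda>t. g \<bullet> z + t * (g \<bullet> h) < b) (at_right 0)"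
    using True by (rule order_tendstoD)
  then show ?thesis
    by eventually_elim (simp add: inner_add_right)
next
  case False
  with assms have "g \<bullet> z = b" and "g \<bullet> h \<le> 0"
    by auto
  then show ?thesis
    using eventually_at_right_less[of 0]
    by (auto elim!: eventually_mono simp: inner_add_right mult_nonneg_nonpos)
qed

lemma eventually_in_ZI_along:
  assumes "finite J" and "z \<in> ZI G S w x J"
    and "\<And>j. j \<in> J \<Longrightarrow> G j \<bullet> z = S j \<bullet> x + w j \<Longrightarrow> G j \<bullet> h \<le> 0"
  shows "eventually (\<lambda>t. z + t *\<^sub>R h \<in> ZI G S w x J) (at_right 0)"
proof -
  have "\<forall>j\<in>J. eventually (\<lambda>t. G j \<bullet> (z + t *\<^sub>R h) \<le> S j \<bullet> x + w j) (at_right 0)"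
    using assms(2,3) unfolding ZI_def Zj_def by (auto intro!: eventually_halfspace_le_along)
  with \<open>finite J\<close> show ?thesis
    unfolding ZI_def Zj_def by (auto simp: eventually_ball_finite_distrib)
qed

lemma V_deriv_nonneg_feasible_direction:
  assumes "finite J" and min: "minimizer_on (V H F x) (ZI G S w x J) z"
    and "\<And>j. j \<in> J \<Longrightarrow> G j \<bullet> z = S j \<bullet> x + w j \<Longrightarrow> G j \<bullet> h \<le> 0"
  shows "0 \<le> V_deriv H F x z h"
proof (rule V_deriv_nonneg_at_minimizer[OF min eventually_in_ZI_along])
  show "z \<in> ZI G S w x J"
    using min unfolding minimizer_on_def ..
qed (use assms in auto)

lemma V_deriv_eq_0_orthogonal_active:
  assumes "finite J" and min: "minimizer_on (V H F x) (ZI G S w x J) z"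
    and "\<And>j. j \<in> J \<Longrightarrow> G j \<bullet> z = S j \<bullet> x + w j \<Longrightarrow> G j \<bullet> h = 0"
  shows "V_deriv H F x z h = 0"
proof -
  have "0 \<le> V_deriv H F x z h" "0 \<le> V_deriv H F x z (- h)"
    using assms by (auto intro!: V_deriv_nonneg_feasible_direction)
  then show ?thesis
    by (simp add: linear_neg[OF linear_V_deriv])
qed

lemma rows_lin_indep_subset:
  "rows_lin_indep G A \<Longrightarrow> B \<subseteq> A \<Longrightarrow> rows_lin_indep G B"
  unfolding rows_lin_indep_def by (meson image_mono independent_mono inj_on_subset)

lemma rows_lin_indep_solvable:
  fixes G :: "nat \<Rightarrow> real^'n"
  assumes "rows_lin_indep G A"
  obtains e where "\<And>i. i \<in> A \<Longrightarrow> G i \<bullet> e = c i"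
proof -
  have inj: "inj_on G A" and indep: "independent (G ` A)"
    using assms unfolding rows_lin_indep_def by auto
  have "\<exists>g :: real^'n \<Rightarrow> real. linear g \<and> (\<forall>v\<in>G ` A. g v = c (the_inv_into A G v))"
    using indep by (rule linear_independent_extend)
  then obtain g :: "real^'n \<Rightarrow> real"
    where g: "linear g" "\<forall>v\<in>G ` A. g v = c (the_inv_into A G v)"
    by blast
  show ?thesis
  proof
    fix i assume "i \<in> A"
    then have "g (G i) = c i"
      using g(2) the_inv_into_f_f[OF inj] by simp
    then show "G i \<bullet> adjoint g 1 = c i"
      by (simp add: adjoint_works[OF g(1)])
  qed
qed

lemma minimizer_on_ZI_drop_inactive:
  assumes psd: "\<And>h. 0 \<le> h \<bullet> (H *v h)" and "finite N" and "I \<subseteq> N"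
    and min: "minimizer_on (V H F x) (ZI G S w x N) z"
    and active: "{j \<in> N. G j \<bullet> z = S j \<bullet> x + w j} \<subseteq> I"
  shows "minimizer_on (V H F x) (ZI G S w x I) z"
  unfolding minimizer_on_def
proof (intro conjI ballI)
  show "z \<in> ZI G S w x I"
    using min ZI_antimono[OF \<open>I \<subseteq> N\<close>] unfolding minimizer_on_def by blast
  fix y assume y: "y \<in> ZI G S w x I"
  have "0 \<le> V_deriv H F x z (y - z)"
  proof (rule V_deriv_nonneg_feasible_direction[OF \<open>finite N\<close> min])
    fix j assume "j \<in> N" and "G j \<bullet> z = S j \<bullet> x + w j"
    moreover from this active y have "G j \<bullet> y \<le> S j \<bullet> x + w j"
      unfolding ZI_def Zj_def by auto
    ultimately show "G j \<bullet> (y - z) \<le> 0"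
      by (simp add: inner_diff_right)
  qed
  moreover have "V H F x z + V_deriv H F x z (y - z) \<le> V H F x (z + (y - z))"
    by (rule V_add_ge[OF psd])
  ultimately show "V H F x z \<le> V H F x y"
    by simp
qed

lemma minimizer_on_ZI_shared_constraints:
  assumes psd: "\<And>h. 0 \<le> h \<bullet> (H *v h)" and fin: "finite (I \<union> B \<union> C)" and "B \<inter> C = {}"
    and min_B: "minimizer_on (V H F x) (ZI G S w x (I \<union> B)) z"
    and min_C: "minimizer_on (V H F x) (ZI G S w x (I \<union> C)) z"
    and LICQ: "rows_lin_indep G {j \<in> I \<union> B \<union> C. G j \<bullet> z = S j \<bullet> x + w j}"
  shows "minimizer_on (V H F x) (ZI G S w x I) z"
  unfolding minimizer_on_def
proof (intro conjI ballI)
  let ?act = "\<lambda>j. G j \<bullet> z = S j \<bullet> x + w j"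
  let ?D = "V_deriv H F x z"
  show "z \<in> ZI G S w x I"
    using min_B ZI_antimono[of I "I \<union> B"] unfolding minimizer_on_def by blast
  fix y assume y: "y \<in> ZI G S w x I"
  define d where "d = y - z"
  \<comment> \<open>Split d = e + f + (d - e - f) along the independent active rows: e is a feasible
    direction for I \<union> B, f is invisible to the active rows of I \<union> C, and d - e - f
    to those of I \<union> B.\<close>
  obtain e where e: "\<And>j. j \<in> {j \<in> I \<union> B \<union> C. ?act j} \<Longrightarrow> G j \<bullet> e = (if j \<in> I then G j \<bullet> d else 0)"
    using rows_lin_indep_solvable[OF LICQ, of "\<lambda>j. if j \<in> I then G j \<bullet> d else 0"] by blast
  obtain f where f: "\<And>j. j \<in> {j \<in> I \<union> B \<union> C. ?act j} \<Longrightarrow> G j \<bullet> f = (if j \<in> B - I then G j \<bullet> d else 0)"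
    using rows_lin_indep_solvable[OF LICQ, of "\<lambda>j. if j \<in> B - I then G j \<bullet> d else 0"] by blast
  have "0 \<le> ?D e"
  proof (rule V_deriv_nonneg_feasible_direction[OF _ min_B])
    fix j assume "j \<in> I \<union> B" and "?act j"
    moreover have "j \<in> I \<Longrightarrow> G j \<bullet> y \<le> S j \<bullet> x + w j"
      using y unfolding ZI_def Zj_def by auto
    ultimately show "G j \<bullet> e \<le> 0"
      using e[of j] by (auto simp: d_def inner_diff_right)
  qed (use fin in auto)
  moreover have "?D f = 0"
  proof (rule V_deriv_eq_0_orthogonal_active[OF _ min_C])
    fix j assume "j \<in> I \<union> C" and "?act j"
    then show "G j \<bullet> f = 0"
      using f[of j] \<open>B \<inter> C = {}\<close> by auto
  qed (use fin in auto)
  moreover have "?D (d - e - f) = 0"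
  proof (rule V_deriv_eq_0_orthogonal_active[OF _ min_B])
    fix j assume "j \<in> I \<union> B" and "?act j"
    then show "G j \<bullet> (d - e - f) = 0"
      using e[of j] f[of j] by (auto simp: inner_diff_right)
  qed (use fin in auto)
  moreover have "?D d = ?D e + ?D f + ?D (d - e - f)"
    using linear_add[OF linear_V_deriv, of H F x z "e + f" "d - e - f"]
    by (simp add: linear_add[OF linear_V_deriv])
  ultimately have "0 \<le> ?D d"
    by simp
  moreover have "V H F x z + ?D d \<le> V H F x (z + d)"
    by (rule V_add_ge[OF psd])
  ultimately show "V H F x z \<le> V H F x y"
    by (simp add: d_def)
qed

lemma Iset_subset: "Iset H F G S w nc \<kappa> xh x k \<subseteq> {..<nc}"
  by (induction k) (auto simp: active_set_def inactive_set_def)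

locale mpqp =
  fixes H :: "real^'z^'z" and F :: "real^'z^'x"
    and G :: "nat \<Rightarrow> real^'z" and S :: "nat \<Rightarrow> real^'x" and w :: "nat \<Rightarrow> real" and nc :: nat
  assumes pos_def: "\<And>h. h \<noteq> 0 \<Longrightarrow> 0 < h \<bullet> (H *v h)"
    and feasible: "\<And>y. ZI G S w y {..<nc} \<noteq> {}"
begin

lemma psd: "0 \<le> h \<bullet> (H *v h)"
  using pos_def[of h] by (cases "h = 0") auto

lemma minimizer_on_zstarI:
  assumes "I \<subseteq> {..<nc}"
  shows "minimizer_on (V H F x) (ZI G S w x I) (zstarI H F G S w x I)"
proof -
  obtain p where "p \<in> ZI G S w x I"
    using feasible[of x] ZI_antimono[OF assms] by blast
  then obtain z where min: "minimizer_on (V H F x) (ZI G S w x I) z"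
    using V_minimizer_exists[OF _ closed_ZI] pos_def by blast
  moreover have "zstarI H F G S w x I = z"
    by (rule zstarI_eqI[OF _ min]) (rule pos_def)
  ultimately show ?thesis
    by simp
qed

lemma minimizer_on_zstar:
  "minimizer_on (V H F x) (ZI G S w x {..<nc}) (zstar H F G S w nc x)"
  unfolding zstar_def by (rule minimizer_on_zstarI) simp

lemma zstarI_eq_zstar:
  assumes "active_set H F G S w nc y \<subseteq> I" and "I \<subseteq> {..<nc}"
  shows "zstarI H F G S w y I = zstar H F G S w nc y"
proof (rule zstarI_eqI[OF pos_def minimizer_on_ZI_drop_inactive[OF psd _ assms(2)]])
  show "{j \<in> {..<nc}. G j \<bullet> zstar H F G S w nc y = S j \<bullet> y + w j} \<subseteq> I"
    using assms(1) unfolding active_set_def by auto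
qed (simp_all add: minimizer_on_zstar)

lemma zstarI_Un_active_eq_zstar:
  assumes lip: "global_lipschitz H F G S w nc \<kappa>" and "I \<union> B \<subseteq> {..<nc}"
    and min: "minimizer_on (V H F x) (ZI G S w x (I \<union> B)) (zstar H F G S w nc x)"
    and cert: "\<And>j. j \<in> B \<Longrightarrow> cball (zstar H F G S w nc y) (\<kappa> * norm (x - y)) \<subseteq> Zj G S w x j"
  shows "zstarI H F G S w x (I \<union> active_set H F G S w nc y) = zstar H F G S w nc x"
proof -
  let ?A = "active_set H F G S w nc y"
  let ?u = "zstarI H F G S w x (I \<union> ?A)"
  have IA: "I \<union> ?A \<subseteq> {..<nc}"
    using assms(2) by (auto simp: active_set_def)
  have "norm (zstarI H F G S w y (I \<union> ?A) - ?u) \<le> \<kappa> * norm (y - x)"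
    using lip IA unfolding global_lipschitz_def by blast
  then have "?u \<in> cball (zstar H F G S w nc y) (\<kappa> * norm (x - y))"
    using zstarI_eq_zstar[OF _ IA] by (simp add: dist_norm norm_minus_commute)
  then have "?u \<in> ZI G S w x B"
    using cert unfolding ZI_def by blast
  have "minimizer_on (V H F x) (ZI G S w x (I \<union> ?A \<union> B)) ?u"
  proof (rule minimizer_on_subset[OF minimizer_on_zstarI[OF IA]])
    show "ZI G S w x (I \<union> ?A \<union> B) \<subseteq> ZI G S w x (I \<union> ?A)"
      by (rule ZI_antimono) blast
    show "?u \<in> ZI G S w x (I \<union> ?A \<union> B)"
      using \<open>?u \<in> ZI G S w x B\<close> minimizer_on_zstarI[OF IA]
      unfolding ZI_Un minimizer_on_def by blast
  qed
  moreover have "minimizer_on (V H F x) (ZI G S w x (I \<union> ?A \<union> B)) (zstar H F G S w nc x)"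
  proof (rule minimizer_on_subset[OF min])
    show "ZI G S w x (I \<union> ?A \<union> B) \<subseteq> ZI G S w x (I \<union> B)"
      by (rule ZI_antimono) blast
    show "zstar H F G S w nc x \<in> ZI G S w x (I \<union> ?A \<union> B)"
      using minimizer_on_zstar ZI_antimono[of "I \<union> ?A \<union> B" "{..<nc}"] IA assms(2)
      unfolding minimizer_on_def by blast
  qed
  ultimately show ?thesis
    using V_minimizer_unique[OF _ convex_ZI] pos_def by blast
qed

lemma Iset_Suc_dropped:
  assumes "j \<in> Iset H F G S w nc \<kappa> xh x k" and "j \<notin> Iset H F G S w nc \<kappa> xh x (Suc k)"
  shows "j \<notin> active_set H F G S w nc (xh (Suc k))"
    and "cball (zstar H F G S w nc (xh (Suc k))) (\<kappa> * norm (x - xh (Suc k))) \<subseteq> Zj G S w x j"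
proof -
  have "j < nc"
    using assms(1) Iset_subset by blast
  moreover have "zstar H F G S w nc (xh (Suc k)) \<in> ZI G S w (xh (Suc k)) {..<nc}"
    using minimizer_on_zstar unfolding minimizer_on_def by blast
  ultimately have "j \<in> active_set H F G S w nc (xh (Suc k)) \<union> inactive_set H F G S w nc (xh (Suc k))"
    unfolding active_set_def inactive_set_def ZI_def Zj_def by force
  with assms show "j \<notin> active_set H F G S w nc (xh (Suc k))"
    and "cball (zstar H F G S w nc (xh (Suc k))) (\<kappa> * norm (x - xh (Suc k))) \<subseteq> Zj G S w x j"
    by auto
qed

lemma minimizer_on_zstar_Iset:
  assumes LICQ: "\<And>y. rows_lin_indep G (active_set H F G S w nc y)"
    and lip: "global_lipschitz H F G S w nc \<kappa>"
  shows "Iset H F G S w nc \<kappa> xh x k \<subseteq> I \<Longrightarrow> I \<subseteq> {..<nc} \<Longrightarrow>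
    minimizer_on (V H F x) (ZI G S w x I) (zstar H F G S w nc x)"
proof (induction k arbitrary: I)
  case 0
  then show ?case
    using minimizer_on_zstar by simp
next
  case (Suc k)
  let ?I = "Iset H F G S w nc \<kappa> xh x" and ?y = "xh (Suc k)" and ?z = "zstar H F G S w nc x"
  let ?A = "active_set H F G S w nc ?y"
  define B where "B = ?I k - I"
  define C where "C = ?A - I"
  have dropped: "j \<notin> ?A" "cball (zstar H F G S w nc ?y) (\<kappa> * norm (x - ?y)) \<subseteq> Zj G S w x j"
    if "j \<in> B" for j
    using Iset_Suc_dropped that Suc.prems(1) unfolding B_def by blast+
  have "I \<union> B \<subseteq> {..<nc}" and "I \<union> ?A \<subseteq> {..<nc}"
    using Suc.prems(2) Iset_subset[of H F G S w nc \<kappa> xh x k]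
    by (auto simp: B_def active_set_def)
  have min_B: "minimizer_on (V H F x) (ZI G S w x (I \<union> B)) ?z"
    using Suc.IH[of "I \<union> ?I k"] \<open>I \<union> B \<subseteq> {..<nc}\<close> by (simp add: B_def)
  have "zstarI H F G S w x (I \<union> ?A) = ?z"
    by (rule zstarI_Un_active_eq_zstar[OF lip \<open>I \<union> B \<subseteq> {..<nc}\<close> min_B dropped(2)])
  then have min_C: "minimizer_on (V H F x) (ZI G S w x (I \<union> C)) ?z"
    using minimizer_on_zstarI[of "I \<union> ?A" x] \<open>I \<union> ?A \<subseteq> {..<nc}\<close>
    by (simp add: C_def)
  have "I \<union> B \<union> C \<subseteq> {..<nc}"
    using \<open>I \<union> B \<subseteq> {..<nc}\<close> \<open>I \<union> ?A \<subseteq> {..<nc}\<close> unfolding C_def by blast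
  then have fin: "finite (I \<union> B \<union> C)"
    by (rule finite_subset) simp
  have disj: "B \<inter> C = {}"
    using dropped(1) unfolding C_def by blast
  have indep: "rows_lin_indep G {j \<in> I \<union> B \<union> C. G j \<bullet> ?z = S j \<bullet> x + w j}"
    using LICQ[of x] by (rule rows_lin_indep_subset)
      (use \<open>I \<union> B \<union> C \<subseteq> {..<nc}\<close> in \<open>auto simp: active_set_def\<close>)
  show ?case
    by (rule minimizer_on_ZI_shared_constraints[OF psd fin disj min_B min_C indep])
qed

end

theorem theorem2:
  fixes H :: "real^'z^'z" and F :: "real^'z^'x"
    and G :: "nat \<Rightarrow> real^'z" and S :: "nat \<Rightarrow> real^'x" and w :: "nat \<Rightarrow> real"
    and nc :: nat and \<kappa> :: real and q :: nat
    and xh :: "nat \<Rightarrow> real^'x" and x :: "real^'x"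
  assumes H_spd: "sym_pos_def H"
    and feasible: "\<forall>y :: real^'x. ZI G S w y {..<nc} \<noteq> {}"
    and LICQ: "\<forall>y :: real^'x. rows_lin_indep G (active_set H F G S w nc y)"
    and lip: "global_lipschitz H F G S w nc \<kappa>"
  shows "zstarI H F G S w x (Iset H F G S w nc \<kappa> xh x q) = zstar H F G S w nc x"
proof -
  interpret mpqp H F G S w nc
    using H_spd feasible by unfold_locales (auto simp: sym_pos_def_def)
  have "minimizer_on (V H F x) (ZI G S w x (Iset H F G S w nc \<kappa> xh x q)) (zstar H F G S w nc x)"
    by (rule minimizer_on_zstar_Iset[OF LICQ[rule_format] lip order.refl Iset_subset])
  then show ?thesis
    by (rule zstarI_eqI[rotated]) (rule pos_def)
qed

end
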